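(* There exist constants $A,B>0$ and $\lambda\in(0,1)$ such that for every $f\in\mathcal{B}$ and every $n\in\mathbb{N}$, $$\|\mathcal{L}^nf\|_s\le A\lambda^n\|f\|_s+B\|f\|_{L^1}.$$
   Context: Let $b:\mathbb{R}^d\to\mathbb{R}^d$ satisfy (A) local Lipschitz continuity: for each $x_0\in\mathbb{R}^d$ there are $K>0$, $\delta_0>0$ with $|b(x_0)-b(x)|\le K|x_0-x|$ whenever $|x_0-x|<\delta_0$; and (B) dissipativity: there are $c_1\in\mathbb{R}$, $c_2>0$ with $\langle b(x),x\rangle\le c_1-c_2|x|^2$ for all $x\in\mathbb{R}^d$. Let $X^x_t$ be the solution of $dX_t^x=b(X_t^x)\,dt+dW_t$, $X_0^x=x$, with $W$ a standard Brownian motion in $\mathbb{R}^d$, and let $\theta_t$ be the flow of $\dot\theta=b(\theta)$. It is known that the law of $X_1^x$ has a density $\kappa(x,y)$ (in $y$, w.r.t. Lebesgue measure), continuous in $(x,y)$, and that there are constants $\lambda_0,\lambda_1\in(0,1]$, $C_0,C_1\ge 1$ such that for all $x,y$: $C_0^{-1}e^{-|\theta_1(x)-y|^2/\lambda_0}\le\kappa(x,y)\le C_0e^{-\lambda_0|\theta_1(x)-y|^2}$ and $|\nabla_x\kappa(x,y)|,|\nabla_y\kappa(x,y)|\le C_1e^{-\lambda_1|\theta_1(x)-y|^2}$. The transfer operator $\mathcal{L}=\mathcal{L}_0:L^1(\mathbb{R}^d)\to L^1(\mathbb{R}^d)$ is $\mathcal{L}f(y)=\int_{\mathbb{R}^d}\kappa(x,y)f(x)\,dx$.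 Spaces: for $\alpha\ge0$ let $\rho_\alpha(x)=(1+|x|^2)^{\alpha/2}$ and let $L^1_\alpha$ be the space of measurable $f:\mathbb{R}^d\to\mathbb{R}$ with $\|f\|_{L^1_\alpha}=\int\rho_\alpha(x)|f(x)|\,dx<\infty$. Fix a compact set $D\subset\mathbb{R}^d$ (a compact neighbourhood of $0$). The strong norm is $\|f\|_s=\|f\|_{L^1_2}+\|1_Df\|_{L^2}$ and the strong space is $\mathcal{B}=\{f\in L^1_2:\|f\|_s<\infty\}$. Set $V_{\mathcal{B}}=\{f\in\mathcal{B}:\int f\,dx=0\}$ and $V_{L^1}=\{f\in L^1:\int f\,dx=0\}$. *)

theory Defs
  imports "HOL-Probability.Probability"
begin

definition locally_lipschitz_drift :: "('a::euclidean_space \<Rightarrow> 'a) \<Rightarrow> bool" where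
  "locally_lipschitz_drift b \<longleftrightarrow>
     (\<forall>x0. \<exists>K>0. \<exists>\<delta>0>0. \<forall>x. norm (x0 - x) < \<delta>0 \<longrightarrow> norm (b x0 - b x) \<le> K * norm (x0 - x))"

definition dissipative_drift :: "('a::euclidean_space \<Rightarrow> 'a) \<Rightarrow> bool" where
  "dissipative_drift b \<longleftrightarrow> (\<exists>c1 c2::real. c2 > 0 \<and> (\<forall>x. b x \<bullet> x \<le> c1 - c2 * (norm x)\<^sup>2))"

definition is_flow :: "('a::euclidean_space \<Rightarrow> 'a) \<Rightarrow> (real \<Rightarrow> 'a \<Rightarrow> 'a) \<Rightarrow> bool" where
  "is_flow b \<theta> \<longleftrightarrow> (\<forall>x. \<theta> 0 x = x \<and>
     (\<forall>t\<ge>0. ((\<lambda>s. \<theta> s x) has_vector_derivative b (\<theta> t x)) (at t within {0..})))"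

definition gauss_density :: "real \<Rightarrow> 'a::euclidean_space \<Rightarrow> real" where
  "gauss_density v x = (\<Prod>i\<in>Basis. normal_density 0 (sqrt v) (x \<bullet> i))"

definition is_brownian_motion :: "'w measure \<Rightarrow> (real \<Rightarrow> 'w \<Rightarrow> 'a::euclidean_space) \<Rightarrow> bool" where
  "is_brownian_motion M W \<longleftrightarrow>
     prob_space M \<and>
     (\<forall>t. W t \<in> borel_measurable M) \<and>
     (\<forall>\<omega>\<in>space M. W 0 \<omega> = 0 \<and> continuous_on {0..} (\<lambda>t. W t \<omega>)) \<and>
     (\<forall>s t. 0 \<le> s \<and> s < t \<longrightarrow>
        distributed M lborel (\<lambda>\<omega>. W t \<omega> - W s \<omega>) (\<lambda>x. ennreal (gauss_density (t - s) x))) \<and>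
     (\<forall>ts::real list. sorted_wrt (<) ts \<and> (\<forall>t\<in>set ts. 0 \<le> t) \<longrightarrow>
        prob_space.indep_vars M (\<lambda>_. borel)
          (\<lambda>i \<omega>. W (ts ! Suc i) \<omega> - W (ts ! i) \<omega>) {..<length ts - 1})"

definition is_sde_solution ::
  "'w measure \<Rightarrow> ('a::euclidean_space \<Rightarrow> 'a) \<Rightarrow> (real \<Rightarrow> 'w \<Rightarrow> 'a) \<Rightarrow> ('a \<Rightarrow> real \<Rightarrow> 'w \<Rightarrow> 'a) \<Rightarrow> bool" where
  "is_sde_solution M b W X \<longleftrightarrow>
     (\<forall>x. \<forall>\<omega>\<in>space M. continuous_on {0..} (\<lambda>t. X x t \<omega>) \<and>
        (\<forall>t\<ge>0. X x t \<omega> = x + integral {0..t} (\<lambda>s. b (X x s \<omega>)) + W t \<omega>))"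

definition transfer_op :: "('a::euclidean_space \<Rightarrow> 'a \<Rightarrow> real) \<Rightarrow> ('a \<Rightarrow> real) \<Rightarrow> 'a \<Rightarrow> real" where
  "transfer_op \<kappa> f = (\<lambda>y. \<integral>x. \<kappa> x y * f x \<partial>lborel)"

definition rho :: "real \<Rightarrow> 'a::euclidean_space \<Rightarrow> real" where
  "rho \<alpha> x = (1 + (norm x)\<^sup>2) powr (\<alpha> / 2)"

text \<open>Norms, valued in [0, infinity] so that infinite norms are not silently truncated.\<close>
definition L1w_norm :: "real \<Rightarrow> ('a::euclidean_space \<Rightarrow> real) \<Rightarrow> ennreal" where
  "L1w_norm \<alpha> f = (\<integral>\<^sup>+ x. ennreal (rho \<alpha> x * \<bar>f x\<bar>) \<partial>lborel)"

definition L1_norm :: "('a::euclidean_space \<Rightarrow> real) \<Rightarrow> ennreal" where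
  "L1_norm f = (\<integral>\<^sup>+ x. ennreal \<bar>f x\<bar> \<partial>lborel)"

definition ennsqrt :: "ennreal \<Rightarrow> ennreal" where
  "ennsqrt I = (if I = \<infinity> then \<infinity> else ennreal (sqrt (enn2real I)))"

definition L2_on_norm :: "'a set \<Rightarrow> ('a::euclidean_space \<Rightarrow> real) \<Rightarrow> ennreal" where
  "L2_on_norm D f = ennsqrt (\<integral>\<^sup>+ x. indicator D x * ennreal ((f x)\<^sup>2) \<partial>lborel)"

definition strong_norm :: "'a set \<Rightarrow> ('a::euclidean_space \<Rightarrow> real) \<Rightarrow> ennreal" where
  "strong_norm D f = L1w_norm 2 f + L2_on_norm D f"

definition strong_space :: "'a::euclidean_space set \<Rightarrow> ('a \<Rightarrow> real) set" where
  "strong_space D = {f. f \<in> borel_measurable lborel \<and> strong_norm D f < \<infinity>}"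

end

theory Submission
  imports Defs
begin

text \<open>
  The kernel \<open>\<kappa> x\<close> is a probability density with Gaussian decay around \<open>\<theta> 1 x\<close>, and
  dissipativity contracts the flow: \<open>|\<theta> 1 x|\<^sup>2 \<le> exp (-2 c\<^sub>2) |x|\<^sup>2 + |c\<^sub>1| / c\<^sub>2\<close>.
  Splitting \<open>|y|\<^sup>2 \<le> (1 + e) |\<theta> 1 x|\<^sup>2 + (1 + 1/e) |y - \<theta> 1 x|\<^sup>2\<close> with small \<open>e\<close>
  gives the drift condition \<open>\<integral> \<rho>\<^sub>2(y) \<kappa>(x,y) dy \<le> \<gamma> \<rho>\<^sub>2(x) + C\<close> with \<open>\<gamma> < 1\<close>.
  By Fubini the transfer operator is then an \<open>L\<^sup>1\<close> contraction satisfying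
  \<open>|L f|\<^sub>L\<^sub>1\<^sub>2 \<le> \<gamma> |f|\<^sub>L\<^sub>1\<^sub>2 + C |f|\<^sub>L\<^sub>1\<close>, while boundedness of \<open>\<kappa>\<close> gives
  \<open>|1\<^sub>D L f|\<^sub>L\<^sub>2 \<le> C\<^sub>0 vol(D)\<^sup>1\<^sup>/\<^sup>2 |f|\<^sub>L\<^sub>1\<close>. Iterating the first inequality
  yields the claim with \<open>\<lambda> = \<gamma>\<close>.
\<close>

lemma (in prob_space) distributed_nn_integral_density_eq_1:
  assumes "distributed M N X f"
  shows "(\<integral>\<^sup>+x. f x \<partial>N) = 1"
  using distributed_nn_integral[OF assms, of "\<lambda>_. 1"] by (simp add: emeasure_space_1)

lemma borel_measurable_lborel_pair_continuous:
  fixes f :: "'a::euclidean_space \<times> 'b::euclidean_space \<Rightarrow> real"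
  assumes "continuous_on UNIV f"
  shows "f \<in> borel_measurable (lborel \<Otimes>\<^sub>M lborel)"
  unfolding lborel_prod using assms by (simp add: borel_measurable_continuous_onI)

lemma gauss_density_eq:
  assumes "0 < v"
  shows "gauss_density v (z::'a::euclidean_space)
           = (1 / sqrt (2 * pi * v)) ^ DIM('a) * exp (- (norm z)\<^sup>2 / (2 * v))"
proof -
  have "gauss_density v z = (\<Prod>i\<in>Basis. 1 / sqrt (2 * pi * v) * exp (- (z \<bullet> i)\<^sup>2 / (2 * v)))"
    unfolding gauss_density_def normal_density_def using assms by simp
  also have "\<dots> = (1 / sqrt (2 * pi * v)) ^ DIM('a) * exp (\<Sum>i\<in>Basis. - (z \<bullet> i)\<^sup>2 / (2 * v))"
    by (simp only: prod.distrib prod_constant exp_sum[OF finite_Basis])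
  also have "(\<Sum>i\<in>Basis. - (z \<bullet> i)\<^sup>2 / (2 * v)) = - (\<Sum>i\<in>Basis. (z \<bullet> i)\<^sup>2) / (2 * v)"
    by (simp add: sum_divide_distrib[symmetric] sum_negf)
  also have "(\<Sum>i\<in>Basis. (z \<bullet> i)\<^sup>2) = (norm z)\<^sup>2"
    unfolding power2_norm_eq_inner by (simp add: euclidean_inner[of z z] power2_eq_square)
  finally show ?thesis .
qed

lemma nn_integral_gauss_density:
  assumes "0 < v"
  shows "(\<integral>\<^sup>+ x. ennreal (gauss_density v x) \<partial>(lborel::'a::euclidean_space measure)) = 1"
proof -
  have "(\<integral>\<^sup>+ x. ennreal (gauss_density v x) \<partial>(lborel::'a measure))
      = (\<integral>\<^sup>+ x. (\<Prod>b\<in>Basis. ennreal (normal_density 0 (sqrt v) (x \<bullet> b))) \<partial>(lborel::'a measure))"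
    unfolding gauss_density_def by (simp add: prod_ennreal)
  also have "\<dots> = (\<Prod>b\<in>(Basis::'a set). \<integral>\<^sup>+ t. ennreal (normal_density 0 (sqrt v) t) \<partial>lborel)"
    by (rule nn_integral_lborel_prod) auto
  also have "\<dots> = 1"
    using assms by (simp add: nn_integral_eq_integral)
  finally show ?thesis .
qed

lemma nn_integral_exp_neg_norm_sq_finite:
  assumes "0 < a"
  shows "(\<integral>\<^sup>+ z. ennreal (exp (- a * (norm z)\<^sup>2)) \<partial>(lborel::'a::euclidean_space measure)) < \<infinity>"
proof -
  define v where "v = 1 / (2 * a)"
  define c where "c = (1 / sqrt (2 * pi * v)) ^ DIM('a)"
  have v: "0 < v" and c: "0 < c"
    using assms by (simp_all add: v_def c_def)
  have "ennreal (exp (- a * (norm z)\<^sup>2)) = ennreal (1 / c) * ennreal (gauss_density v z)"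
    for z :: 'a
  proof -
    have "(norm z)\<^sup>2 / (2 * v) = a * (norm z)\<^sup>2"
      using assms by (simp add: v_def)
    then have "exp (- a * (norm z)\<^sup>2) = 1 / c * gauss_density v z"
      using c by (simp add: gauss_density_eq[OF v] c_def[symmetric])
    also have "ennreal \<dots> = ennreal (1 / c) * ennreal (gauss_density v z)"
      using c by (intro ennreal_mult) (auto simp: gauss_density_def prod_nonneg)
    finally show ?thesis .
  qed
  then have "(\<integral>\<^sup>+ z. ennreal (exp (- a * (norm z)\<^sup>2)) \<partial>(lborel::'a measure))
      = (\<integral>\<^sup>+ z. ennreal (1 / c) * ennreal (gauss_density v z) \<partial>(lborel::'a measure))"
    by simp
  also have "\<dots> = ennreal (1 / c) * (\<integral>\<^sup>+ z. ennreal (gauss_density v z) \<partial>(lborel::'a measure))"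
    by (rule nn_integral_cmult) (simp add: gauss_density_def)
  also have "\<dots> = ennreal (1 / c)"
    by (simp add: nn_integral_gauss_density[OF v])
  finally show ?thesis by simp
qed

lemma mult_exp_neg_le:
  fixes l s :: real
  assumes "0 < l" "0 \<le> s"
  shows "s * exp (- l * s) \<le> 2 / l * exp (- (l / 2) * s)"
proof -
  define a where "a = l * s / 2"
  have "a \<le> exp a"
    using exp_ge_add_one_self[of a] by linarith
  then have "a * exp (- a) \<le> 1"
    by (simp add: exp_minus field_simps)
  have "s * exp (- l * s) = 2 / l * (a * exp (- a)) * exp (- a)"
    using assms by (simp add: a_def field_simps exp_add[symmetric])
  also have "\<dots> \<le> 2 / l * 1 * exp (- a)"
    using \<open>a * exp (- a) \<le> 1\<close> assms by (intro mult_right_mono mult_left_mono) auto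
  finally show ?thesis
    by (simp add: a_def)
qed

lemma power2_add_le_weighted:
  fixes p q e :: real
  assumes "0 < e"
  shows "(p + q)\<^sup>2 \<le> (1 + e) * p\<^sup>2 + (1 + 1 / e) * q\<^sup>2"
proof -
  have "0 \<le> (e * p - q)\<^sup>2 / e" using assms by simp
  also have "\<dots> = e * p\<^sup>2 + q\<^sup>2 / e - 2 * p * q"
    using assms by (simp add: power2_eq_square field_simps)
  finally show ?thesis by (simp add: power2_eq_square field_simps)
qed

lemma rho_2_eq: "rho 2 (y::'a::euclidean_space) = 1 + (norm y)\<^sup>2"
  unfolding rho_def by (simp add: add_pos_nonneg)

lemma borel_measurable_rho_2 [measurable]:
  "(rho 2 :: 'a::euclidean_space \<Rightarrow> real) \<in> borel_measurable borel"
  unfolding rho_2_eq[abs_def] by measurable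

lemma flow_continuous_on:
  assumes "is_flow b \<theta>"
  shows "continuous_on {0..} (\<lambda>t. \<theta> t x)"
  using assms unfolding is_flow_def continuous_on_eq_continuous_within
  by (metis atLeast_iff has_vector_derivative_continuous)

lemma flow_norm_sq_has_derivative:
  assumes "is_flow b \<theta>" "0 < t"
  shows "((\<lambda>s. (norm (\<theta> s x))\<^sup>2) has_real_derivative 2 * (b (\<theta> t x) \<bullet> \<theta> t x)) (at t)"
proof -
  have "((\<lambda>s. \<theta> s x) has_vector_derivative b (\<theta> t x)) (at t within {0..})"
    using assms unfolding is_flow_def by simp
  then have "((\<lambda>s. \<theta> s x) has_vector_derivative b (\<theta> t x)) (at t)"
    using assms(2) at_within_interior[of t "{0..}"] by simp
  then have "((\<lambda>s. \<theta> s x) has_derivative (\<lambda>h. h *\<^sub>R b (\<theta> t x))) (at t)"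
    by (simp add: has_vector_derivative_def)
  then have "((\<lambda>s. \<theta> s x \<bullet> \<theta> s x) has_derivative
      (\<lambda>h. \<theta> t x \<bullet> (h *\<^sub>R b (\<theta> t x)) + (h *\<^sub>R b (\<theta> t x)) \<bullet> \<theta> t x)) (at t)"
    by (intro has_derivative_inner)
  moreover have "(\<lambda>h. \<theta> t x \<bullet> (h *\<^sub>R b (\<theta> t x)) + (h *\<^sub>R b (\<theta> t x)) \<bullet> \<theta> t x)
      = (*) (2 * (b (\<theta> t x) \<bullet> \<theta> t x))"
    by (auto simp: fun_eq_iff inner_commute algebra_simps)
  ultimately show ?thesis
    by (simp add: has_field_derivative_def power2_norm_eq_inner)
qed

text \<open>Dissipativity makes \<open>exp (2 c\<^sub>2 t) ((norm (\<theta> t x))\<^sup>2 - c\<^sub>1 / c\<^sub>2)\<close> nonincreasing in \<open>t\<close>.\<close>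
lemma flow_norm_sq_le:
  assumes flow: "is_flow b \<theta>"
    and diss: "\<And>x. b x \<bullet> x \<le> c1 - c2 * (norm x)\<^sup>2" and c2: "0 < c2"
  shows "(norm (\<theta> 1 x))\<^sup>2 \<le> exp (- 2 * c2) * (norm x)\<^sup>2 + \<bar>c1\<bar> / c2"
proof -
  define u where "u t = (norm (\<theta> t x))\<^sup>2" for t
  define w where "w t = exp (2 * c2 * t) * (u t - c1 / c2)" for t
  have "continuous_on {0..1} w"
    using continuous_on_subset[OF flow_continuous_on[OF flow, of x], of "{0..1}"]
    unfolding w_def u_def by (auto intro!: continuous_intros)
  moreover have "\<exists>w'. (w has_real_derivative w') (at t) \<and> w' \<le> 0" if "0 < t" "t < 1" for t
  proof (intro exI conjI)
    let ?v = "b (\<theta> t x) \<bullet> \<theta> t x"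
    have "(u has_real_derivative 2 * ?v) (at t)"
      unfolding u_def by (rule flow_norm_sq_has_derivative[OF flow \<open>0 < t\<close>])
    then show "(w has_real_derivative
        exp (2 * c2 * t) * (2 * c2) * (u t - c1 / c2) + exp (2 * c2 * t) * (2 * ?v)) (at t)"
      unfolding w_def by (auto intro!: derivative_eq_intros)
    have "?v \<le> c1 - c2 * u t"
      using diss[of "\<theta> t x"] by (simp add: u_def)
    then have "2 * c2 * (u t - c1 / c2) + 2 * ?v \<le> 0"
      using c2 by (simp add: algebra_simps)
    then have "exp (2 * c2 * t) * (2 * c2 * (u t - c1 / c2) + 2 * ?v) \<le> 0"
      by (simp add: mult_nonneg_nonpos)
    then show "exp (2 * c2 * t) * (2 * c2) * (u t - c1 / c2) + exp (2 * c2 * t) * (2 * ?v) \<le> 0"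
      by (simp only: distrib_left mult.assoc)
  qed
  ultimately have "w 1 \<le> w 0"
    by (intro DERIV_nonpos_imp_decreasing_open[of 0 1 w]) auto
  moreover have "u 0 = (norm x)\<^sup>2"
    using flow by (simp add: u_def is_flow_def)
  ultimately have "u 1 - c1 / c2 \<le> exp (- 2 * c2) * ((norm x)\<^sup>2 - c1 / c2)"
    by (simp add: w_def exp_minus field_simps)
  moreover have "(1 - exp (- 2 * c2)) * (c1 / c2) \<le> (1 - exp (- 2 * c2)) * (\<bar>c1\<bar> / c2)"
    using c2 by (intro mult_left_mono divide_right_mono) auto
  moreover have "\<dots> \<le> \<bar>c1\<bar> / c2"
    using c2 by (intro mult_left_le_one_le) auto
  ultimately show ?thesis
    by (simp add: u_def algebra_simps)
qed

lemma ennreal_geometric_recursion_le: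
  fixes a :: "nat \<Rightarrow> ennreal"
  assumes step: "\<And>k. a (Suc k) \<le> ennreal \<gamma> * a k + ennreal C * m"
    and \<gamma>: "0 \<le> \<gamma>" "\<gamma> < 1" and C: "0 \<le> C"
  shows "a k \<le> ennreal (\<gamma> ^ k) * a 0 + ennreal (C / (1 - \<gamma>)) * m"
proof (induction k)
  case 0
  show ?case by simp
next
  case (Suc k)
  define S where "S = C / (1 - \<gamma>)"
  have S: "0 \<le> S" and fixpoint: "\<gamma> * S + C = S"
    using \<gamma> C by (simp_all add: S_def field_simps)
  have "a (Suc k) \<le> ennreal \<gamma> * (ennreal (\<gamma> ^ k) * a 0 + ennreal S * m) + ennreal C * m"
    using order.trans[OF step[of k] add_right_mono[OF mult_left_mono[OF Suc.IH]]]
    unfolding S_def by simp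
  also have "\<dots> = ennreal (\<gamma> ^ Suc k) * a 0 + ennreal (\<gamma> * S + C) * m"
    using \<gamma> S C by (simp add: ennreal_mult ennreal_plus algebra_simps)
  finally have "a (Suc k) \<le> ennreal (\<gamma> ^ Suc k) * a 0 + ennreal S * m"
    unfolding fixpoint .
  then show ?case
    by (simp add: S_def)
qed

lemma strong_norm_iterate_le:
  fixes L :: "('a::euclidean_space \<Rightarrow> real) \<Rightarrow> ('a \<Rightarrow> real)"
  assumes meas: "\<And>g. g \<in> borel_measurable lborel \<Longrightarrow> L g \<in> borel_measurable lborel"
    and L1: "\<And>g. g \<in> borel_measurable lborel \<Longrightarrow> L1_norm (L g) \<le> L1_norm g"
    and L1w: "\<And>g. g \<in> borel_measurable lborel \<Longrightarrow>
                L1w_norm 2 (L g) \<le> ennreal \<gamma> * L1w_norm 2 g + ennreal C * L1_norm g"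
    and L2: "\<And>g. g \<in> borel_measurable lborel \<Longrightarrow> L2_on_norm D (L g) \<le> ennreal K * L1_norm g"
    and \<gamma>: "0 \<le> \<gamma>" "\<gamma> < 1" and C: "0 \<le> C" and K: "0 \<le> K"
    and f: "f \<in> borel_measurable lborel"
  shows "strong_norm D ((L ^^ n) f)
           \<le> ennreal (\<gamma> ^ n) * strong_norm D f + ennreal (C / (1 - \<gamma>) + K) * L1_norm f"
proof -
  have meas_iter: "(L ^^ k) f \<in> borel_measurable lborel" for k
    by (induction k) (simp_all only: funpow.simps comp_apply id_apply f meas)
  have L1_iter: "L1_norm ((L ^^ k) f) \<le> L1_norm f" for k
    by (induction k) (auto intro: order.trans[OF L1[OF meas_iter]])
  have "L1w_norm 2 ((L ^^ Suc k) f) \<le> ennreal \<gamma> * L1w_norm 2 ((L ^^ k) f) + ennreal C * L1_norm f"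
    for k
    using order.trans[OF L1w[OF meas_iter[of k]] add_left_mono[OF mult_left_mono[OF L1_iter]]]
    by simp
  then have L1w_iter: "L1w_norm 2 ((L ^^ n) f)
      \<le> ennreal (\<gamma> ^ n) * L1w_norm 2 f + ennreal (C / (1 - \<gamma>)) * L1_norm f"
    using ennreal_geometric_recursion_le[OF _ \<gamma> C] by fastforce
  show ?thesis
  proof (cases n)
    case 0
    then show ?thesis by (simp add: add_increasing2)
  next
    case (Suc k)
    have "L2_on_norm D ((L ^^ n) f) \<le> ennreal K * L1_norm ((L ^^ k) f)"
      using L2[OF meas_iter[of k]] Suc by simp
    also have "\<dots> \<le> ennreal K * L1_norm f"
      by (intro mult_left_mono L1_iter) simp
    finally have "strong_norm D ((L ^^ n) f)
        \<le> ennreal (\<gamma> ^ n) * L1w_norm 2 f + ennreal (C / (1 - \<gamma>)) * L1_norm f + ennreal K * L1_norm f"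
      unfolding strong_norm_def by (intro add_mono L1w_iter)
    also have "\<dots> \<le> ennreal (\<gamma> ^ n) * strong_norm D f + ennreal (C / (1 - \<gamma>) + K) * L1_norm f"
    proof -
      have "ennreal (\<gamma> ^ n) * L1w_norm 2 f \<le> ennreal (\<gamma> ^ n) * strong_norm D f"
        unfolding strong_norm_def by (intro mult_left_mono add_increasing2) simp_all
      moreover have "ennreal (C / (1 - \<gamma>) + K) = ennreal (C / (1 - \<gamma>)) + ennreal K"
        using \<gamma> C K by (intro ennreal_plus) simp_all
      ultimately show ?thesis
        by (simp add: distrib_right add.assoc add_right_mono)
    qed
    finally show ?thesis .
  qed
qed

lemma L2_on_norm_le_bound:
  fixes h :: "'a::euclidean_space \<Rightarrow> real"
  assumes D: "compact D" and h: "\<And>y. \<bar>h y\<bar> \<le> c"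
  shows "L2_on_norm D h \<le> ennreal (c * sqrt (measure lborel D))"
proof -
  define I where "I = (\<integral>\<^sup>+ y. indicator D y * ennreal ((h y)\<^sup>2) \<partial>lborel)"
  have c: "0 \<le> c"
    using h by (meson abs_ge_zero order.trans)
  have "I \<le> (\<integral>\<^sup>+ y. ennreal (c\<^sup>2) * indicator D y \<partial>lborel)"
    unfolding I_def using h c
    by (intro nn_integral_mono) (auto simp: abs_le_square_iff[symmetric] abs_of_nonneg mult.commute split: split_indicator)
  also have "\<dots> = ennreal (c\<^sup>2 * measure lborel D)"
    using D emeasure_compact_finite[OF D]
    by (simp add: nn_integral_cmult_indicator borel_compact emeasure_eq_ennreal_measure ennreal_mult)
  finally have I: "I \<le> ennreal (c\<^sup>2 * measure lborel D)" .
  then have "I \<noteq> \<infinity>"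
    by (auto simp: top_unique)
  moreover have "sqrt (enn2real I) \<le> sqrt (c\<^sup>2 * measure lborel D)"
    using enn2real_mono[OF I] by simp
  ultimately show ?thesis
    using c by (simp add: L2_on_norm_def ennsqrt_def I_def[symmetric] real_sqrt_mult ennreal_leI)
qed

lemma nn_integral_lborel_translate:
  fixes f :: "'a::euclidean_space \<Rightarrow> ennreal"
  assumes [measurable]: "f \<in> borel_measurable borel"
  shows "(\<integral>\<^sup>+ y. f (y - p) \<partial>lborel) = (\<integral>\<^sup>+ z. f z \<partial>lborel)"
proof -
  have "(\<integral>\<^sup>+ y. f (y - p) \<partial>lborel) = (\<integral>\<^sup>+ y. f (y - p) \<partial>distr lborel borel ((+) p))"
    by (simp only: lborel_distr_plus)
  also have "\<dots> = (\<integral>\<^sup>+ z. f z \<partial>lborel)"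
    by (subst nn_integral_distr) simp_all
  finally show ?thesis .
qed

locale transfer_kernel =
  fixes \<kappa> :: "'a::euclidean_space \<Rightarrow> 'a \<Rightarrow> real"
  assumes kernel_measurable: "(\<lambda>(x, y). \<kappa> x y) \<in> borel_measurable (lborel \<Otimes>\<^sub>M lborel)"
    and kernel_nonneg: "0 \<le> \<kappa> x y"
    and kernel_mass: "(\<integral>\<^sup>+ y. ennreal (\<kappa> x y) \<partial>lborel) = 1"
begin

lemma measurable_kernel [measurable]:
  "(\<lambda>p. \<kappa> (fst p) (snd p)) \<in> borel_measurable (lborel \<Otimes>\<^sub>M lborel)"
  "(\<lambda>p. \<kappa> (snd p) (fst p)) \<in> borel_measurable (lborel \<Otimes>\<^sub>M lborel)"
  "(\<lambda>y. \<kappa> x y) \<in> borel_measurable lborel"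
  "(\<lambda>x. \<kappa> x y) \<in> borel_measurable lborel"
proof -
  show uncurried: "(\<lambda>p. \<kappa> (fst p) (snd p)) \<in> borel_measurable (lborel \<Otimes>\<^sub>M lborel)"
    using kernel_measurable by (simp add: case_prod_beta')
  show "(\<lambda>p. \<kappa> (snd p) (fst p)) \<in> borel_measurable (lborel \<Otimes>\<^sub>M lborel)"
    using measurable_compose[OF measurable_pair_swap' uncurried] by (simp add: case_prod_beta')
  show "(\<lambda>y. \<kappa> x y) \<in> borel_measurable lborel"
    using measurable_compose[OF measurable_Pair1'[of x lborel lborel] uncurried] by simp
  show "(\<lambda>x. \<kappa> x y) \<in> borel_measurable lborel"
    using measurable_compose[OF measurable_Pair2'[of y lborel lborel] uncurried] by simp
qed

lemma abs_transfer_op_le: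
  "ennreal \<bar>transfer_op \<kappa> g y\<bar> \<le> (\<integral>\<^sup>+ x. ennreal (\<kappa> x y) * ennreal \<bar>g x\<bar> \<partial>lborel)"
proof (cases "integrable lborel (\<lambda>x. \<kappa> x y * g x)")
  case True
  have "ennreal \<bar>transfer_op \<kappa> g y\<bar> \<le> (\<integral>\<^sup>+ x. norm (\<kappa> x y * g x) \<partial>lborel)"
    using integral_norm_bound_ennreal[OF True] by (simp add: transfer_op_def)
  also have "\<dots> = (\<integral>\<^sup>+ x. ennreal (\<kappa> x y) * ennreal \<bar>g x\<bar> \<partial>lborel)"
    using kernel_nonneg by (intro nn_integral_cong) (simp add: abs_mult ennreal_mult)
  finally show ?thesis .
next
  case False
  then show ?thesis
    by (simp add: transfer_op_def not_integrable_integral_eq)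
qed

lemma borel_measurable_transfer_op:
  assumes [measurable]: "g \<in> borel_measurable lborel"
  shows "transfer_op \<kappa> g \<in> borel_measurable lborel"
proof -
  have "(\<lambda>(y, x). \<kappa> x y * g x) \<in> borel_measurable (lborel \<Otimes>\<^sub>M lborel)"
    unfolding case_prod_beta' by measurable
  then show ?thesis
    unfolding transfer_op_def by (rule lborel.borel_measurable_lebesgue_integral)
qed

lemma nn_integral_transfer_op_weighted_le:
  assumes [measurable]: "g \<in> borel_measurable lborel" "w \<in> borel_measurable lborel"
    and w_nonneg: "\<And>y. 0 \<le> w y"
  shows "(\<integral>\<^sup>+ y. ennreal (w y) * ennreal \<bar>transfer_op \<kappa> g y\<bar> \<partial>lborel)
           \<le> (\<integral>\<^sup>+ x. (\<integral>\<^sup>+ y. ennreal (w y * \<kappa> x y) \<partial>lborel) * ennreal \<bar>g x\<bar> \<partial>lborel)"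
proof -
  have "(\<integral>\<^sup>+ y. ennreal (w y) * ennreal \<bar>transfer_op \<kappa> g y\<bar> \<partial>lborel)
      \<le> (\<integral>\<^sup>+ y. ennreal (w y) * (\<integral>\<^sup>+ x. ennreal (\<kappa> x y) * ennreal \<bar>g x\<bar> \<partial>lborel) \<partial>lborel)"
    by (intro nn_integral_mono mult_left_mono abs_transfer_op_le) simp
  also have "\<dots> = (\<integral>\<^sup>+ y. (\<integral>\<^sup>+ x. ennreal (w y * \<kappa> x y) * ennreal \<bar>g x\<bar> \<partial>lborel) \<partial>lborel)"
    by (subst nn_integral_cmult[symmetric])
       (auto intro!: nn_integral_cong simp: ennreal_mult w_nonneg kernel_nonneg mult.assoc)
  also have "\<dots> = (\<integral>\<^sup>+ x. (\<integral>\<^sup>+ y. ennreal (w y * \<kappa> x y) * ennreal \<bar>g x\<bar> \<partial>lborel) \<partial>lborel)"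
    by (rule lborel_pair.Fubini') measurable
  also have "\<dots> = (\<integral>\<^sup>+ x. (\<integral>\<^sup>+ y. ennreal (w y * \<kappa> x y) \<partial>lborel) * ennreal \<bar>g x\<bar> \<partial>lborel)"
    by (intro nn_integral_cong nn_integral_multc) measurable
  finally show ?thesis .
qed

lemma L1_norm_transfer_op_le:
  assumes [measurable]: "g \<in> borel_measurable lborel"
  shows "L1_norm (transfer_op \<kappa> g) \<le> L1_norm g"
  using nn_integral_transfer_op_weighted_le[of g "\<lambda>_. 1"]
  by (simp add: L1_norm_def kernel_mass)

lemma L1w_norm_transfer_op_le:
  assumes [measurable]: "g \<in> borel_measurable lborel"
    and moment: "\<And>x. (\<integral>\<^sup>+ y. ennreal (rho 2 y * \<kappa> x y) \<partial>lborel) \<le> ennreal (\<gamma> * rho 2 x + C)"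
    and "0 \<le> \<gamma>" "0 \<le> C"
  shows "L1w_norm 2 (transfer_op \<kappa> g) \<le> ennreal \<gamma> * L1w_norm 2 g + ennreal C * L1_norm g"
proof -
  have "L1w_norm 2 (transfer_op \<kappa> g)
      = (\<integral>\<^sup>+ y. ennreal (rho 2 y) * ennreal \<bar>transfer_op \<kappa> g y\<bar> \<partial>lborel)"
    by (simp add: L1w_norm_def ennreal_mult rho_2_eq)
  also have "\<dots> \<le> (\<integral>\<^sup>+ x. (\<integral>\<^sup>+ y. ennreal (rho 2 y * \<kappa> x y) \<partial>lborel) * ennreal \<bar>g x\<bar> \<partial>lborel)"
    by (rule nn_integral_transfer_op_weighted_le) (simp_all add: rho_2_eq)
  also have "\<dots> \<le> (\<integral>\<^sup>+ x. ennreal (\<gamma> * rho 2 x + C) * ennreal \<bar>g x\<bar> \<partial>lborel)"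
    by (intro nn_integral_mono mult_right_mono moment) simp
  also have "\<dots> = (\<integral>\<^sup>+ x. ennreal \<gamma> * ennreal (rho 2 x * \<bar>g x\<bar>) + ennreal C * ennreal \<bar>g x\<bar> \<partial>lborel)"
  proof (intro nn_integral_cong)
    fix x
    have "ennreal (\<gamma> * rho 2 x + C) * ennreal \<bar>g x\<bar> = ennreal (\<gamma> * (rho 2 x * \<bar>g x\<bar>) + C * \<bar>g x\<bar>)"
      using assms(3,4) by (simp add: ennreal_mult[symmetric] rho_2_eq algebra_simps)
    also have "\<dots> = ennreal \<gamma> * ennreal (rho 2 x * \<bar>g x\<bar>) + ennreal C * ennreal \<bar>g x\<bar>"
      using assms(3,4) by (simp add: ennreal_plus ennreal_mult rho_2_eq)
    finally show "ennreal (\<gamma> * rho 2 x + C) * ennreal \<bar>g x\<bar>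
        = ennreal \<gamma> * ennreal (rho 2 x * \<bar>g x\<bar>) + ennreal C * ennreal \<bar>g x\<bar>" .
  qed
  also have "\<dots> = ennreal \<gamma> * L1w_norm 2 g + ennreal C * L1_norm g"
    unfolding L1w_norm_def L1_norm_def
    by (subst nn_integral_add) (auto simp: nn_integral_cmult)
  finally show ?thesis .
qed

text \<open>The summand 1 keeps the constant positive, so the bound also covers \<open>L1_norm g = \<infinity>\<close>.\<close>
lemma L2_on_norm_transfer_op_le:
  assumes [measurable]: "g \<in> borel_measurable lborel"
    and bounded: "\<And>x y. \<kappa> x y \<le> C0" and D: "compact D"
  shows "L2_on_norm D (transfer_op \<kappa> g) \<le> ennreal (C0 * sqrt (measure lborel D) + 1) * L1_norm g"
proof -
  have C0: "0 \<le> C0"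
    using order.trans[OF kernel_nonneg bounded] .
  show ?thesis
  proof (cases "L1_norm g")
  case (real a)
  have "ennreal \<bar>transfer_op \<kappa> g y\<bar> \<le> ennreal (C0 * a)" for y
  proof -
    have "ennreal \<bar>transfer_op \<kappa> g y\<bar> \<le> (\<integral>\<^sup>+ x. ennreal C0 * ennreal \<bar>g x\<bar> \<partial>lborel)"
      using bounded
      by (intro order.trans[OF abs_transfer_op_le] nn_integral_mono mult_right_mono ennreal_leI) auto
    also have "\<dots> = ennreal (C0 * a)"
      using real C0 by (simp add: nn_integral_cmult L1_norm_def ennreal_mult)
    finally show ?thesis .
  qed
  then have "L2_on_norm D (transfer_op \<kappa> g) \<le> ennreal (C0 * a * sqrt (measure lborel D))"
    using real C0 by (intro L2_on_norm_le_bound[OF D]) (simp add: ennreal_le_iff)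
  also have "\<dots> \<le> ennreal ((C0 * sqrt (measure lborel D) + 1) * a)"
    using real by (intro ennreal_leI) (simp add: algebra_simps)
  finally show ?thesis
    using real C0 by (simp add: ennreal_mult)
next
  case top
  have "0 < C0 * sqrt (measure lborel D) + 1"
    using C0 by (intro add_nonneg_pos) simp_all
  then show ?thesis
    using top by (simp add: ennreal_mult_top)
qed
qed

lemma nn_integral_rho_2_kernel_le:
  assumes upper: "\<And>y. \<kappa> x y \<le> C0 * exp (- l * (norm (p - y))\<^sup>2)" and l: "0 < l" and e: "0 < e"
  shows "(\<integral>\<^sup>+ y. ennreal (rho 2 y * \<kappa> x y) \<partial>lborel)
           \<le> ennreal (1 + (1 + e) * (norm p)\<^sup>2)
             + ennreal ((1 + 1 / e) * C0 * (2 / l))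
               * (\<integral>\<^sup>+ z. ennreal (exp (- (l / 2) * (norm z)\<^sup>2)) \<partial>(lborel::'a measure))"
proof -
  define A where "A = 1 + (1 + e) * (norm p)\<^sup>2"
  define B where "B = (1 + 1 / e) * C0 * (2 / l)"
  define h where "h z = exp (- (l / 2) * (norm z)\<^sup>2)" for z :: 'a
  have C0: "0 \<le> C0"
    using order.trans[OF kernel_nonneg upper] by (simp add: zero_le_mult_iff)
  have A: "0 \<le> A" and B: "0 \<le> B"
    using e l C0 by (simp_all add: A_def B_def)
  have h_meas [measurable]: "h \<in> borel_measurable borel"
    unfolding h_def[abs_def] by measurable
  have pointwise: "rho 2 y * \<kappa> x y \<le> A * \<kappa> x y + B * h (y - p)" for y
  proof -
    define s where "s = (norm (y - p))\<^sup>2"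
    have s: "0 \<le> s" by (simp add: s_def)
    have "(norm y)\<^sup>2 \<le> (norm p + norm (y - p))\<^sup>2"
      using norm_triangle_ineq[of p "y - p"] by (intro power_mono) auto
    also have "\<dots> \<le> (1 + e) * (norm p)\<^sup>2 + (1 + 1 / e) * s"
      unfolding s_def by (rule power2_add_le_weighted[OF e])
    finally have "(norm y)\<^sup>2 * \<kappa> x y \<le> ((1 + e) * (norm p)\<^sup>2 + (1 + 1 / e) * s) * \<kappa> x y"
      using kernel_nonneg by (rule mult_right_mono)
    then have "rho 2 y * \<kappa> x y \<le> A * \<kappa> x y + (1 + 1 / e) * (s * \<kappa> x y)"
      by (simp add: rho_2_eq A_def algebra_simps)
    moreover have "(1 + 1 / e) * (s * \<kappa> x y) \<le> B * h (y - p)"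
    proof -
      have "s * \<kappa> x y \<le> C0 * (s * exp (- l * s))"
        using mult_left_mono[OF upper[of y] s] by (simp add: s_def norm_minus_commute mult.left_commute)
      also have "\<dots> \<le> C0 * (2 / l * h (y - p))"
        using mult_left_mono[OF mult_exp_neg_le[OF l s] C0] by (simp add: h_def s_def)
      finally have "(1 + 1 / e) * (s * \<kappa> x y) \<le> (1 + 1 / e) * (C0 * (2 / l * h (y - p)))"
        using e by (intro mult_left_mono) auto
      then show ?thesis
        by (simp add: B_def mult.assoc)
    qed
    ultimately show ?thesis
      by linarith
  qed
  have "(\<integral>\<^sup>+ y. ennreal (rho 2 y * \<kappa> x y) \<partial>lborel)
      \<le> (\<integral>\<^sup>+ y. ennreal A * ennreal (\<kappa> x y) + ennreal B * ennreal (h (y - p)) \<partial>lborel)"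
    using A B kernel_nonneg
    by (intro nn_integral_mono order.trans[OF ennreal_leI[OF pointwise]])
       (simp add: ennreal_plus ennreal_mult h_def)
  also have "\<dots> = ennreal A + ennreal B * (\<integral>\<^sup>+ z. ennreal (h z) \<partial>lborel)"
    by (simp add: nn_integral_add nn_integral_cmult kernel_mass
        nn_integral_lborel_translate[of "\<lambda>z. ennreal (h z)"])
  finally show ?thesis
    by (simp add: A_def B_def h_def)
qed

lemma moment_contraction:
  assumes upper: "\<And>x y. \<kappa> x y \<le> C0 * exp (- l * (norm (T x - y))\<^sup>2)" and l: "0 < l"
    and contraction: "\<And>x. (norm (T x))\<^sup>2 \<le> q * (norm x)\<^sup>2 + r"
    and q: "0 < q" "q < 1" and r: "0 \<le> r"
  obtains \<gamma> C where "0 < \<gamma>" "\<gamma> < 1" "0 \<le> C"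
    and "\<And>x. (\<integral>\<^sup>+ y. ennreal (rho 2 y * \<kappa> x y) \<partial>lborel) \<le> ennreal (\<gamma> * rho 2 x + C)"
proof -
  define e where "e = (1 - q) / (2 * q)"
  define \<gamma> where "\<gamma> = (1 + q) / 2"
  have e: "0 < e" and \<gamma>_eq: "(1 + e) * q = \<gamma>" and \<gamma>: "0 < \<gamma>" "\<gamma> < 1"
    using q by (simp_all add: e_def \<gamma>_def field_simps)
  obtain G where G: "(\<integral>\<^sup>+ z. ennreal (exp (- (l / 2) * (norm z)\<^sup>2)) \<partial>(lborel::'a measure)) = ennreal G"
    and "0 \<le> G"
    using nn_integral_exp_neg_norm_sq_finite[of "l / 2"] l less_top_ennreal by auto
  have C0: "0 \<le> C0"
    using order.trans[OF kernel_nonneg upper] by (simp add: zero_le_mult_iff)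
  define B where "B = (1 + 1 / e) * C0 * (2 / l)"
  have B: "0 \<le> B"
    using e C0 l by (simp add: B_def)
  define C where "C = 1 + (1 + e) * r + B * G"
  show ?thesis
  proof (rule that)
    show "0 < \<gamma>" "\<gamma> < 1"
      by (fact \<gamma>)+
    show "0 \<le> C"
      using e r B \<open>0 \<le> G\<close> by (simp add: C_def)
    fix x
    have "(1 + e) * (norm (T x))\<^sup>2 \<le> \<gamma> * (norm x)\<^sup>2 + (1 + e) * r"
      unfolding \<gamma>_eq[symmetric] using mult_left_mono[OF contraction[of x], of "1 + e"] e
      by (simp add: algebra_simps)
    moreover have "\<gamma> * rho 2 x + C = \<gamma> + \<gamma> * (norm x)\<^sup>2 + 1 + (1 + e) * r + B * G"
      by (simp add: rho_2_eq C_def algebra_simps)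
    ultimately have bound: "1 + (1 + e) * (norm (T x))\<^sup>2 + B * G \<le> \<gamma> * rho 2 x + C"
      using \<gamma> by linarith
    have "(\<integral>\<^sup>+ y. ennreal (rho 2 y * \<kappa> x y) \<partial>lborel)
        \<le> ennreal (1 + (1 + e) * (norm (T x))\<^sup>2) + ennreal B * ennreal G"
      using nn_integral_rho_2_kernel_le[OF upper l e] unfolding G B_def .
    also have "\<dots> = ennreal (1 + (1 + e) * (norm (T x))\<^sup>2 + B * G)"
      using B e \<open>0 \<le> G\<close> by (simp add: ennreal_mult ennreal_plus)
    also have "\<dots> \<le> ennreal (\<gamma> * rho 2 x + C)"
      by (rule ennreal_leI[OF bound])
    finally show "(\<integral>\<^sup>+ y. ennreal (rho 2 y * \<kappa> x y) \<partial>lborel) \<le> ennreal (\<gamma> * rho 2 x + C)" .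
  qed
qed

end

theorem lemma3p5:
  fixes b :: "'a::euclidean_space \<Rightarrow> 'a"
    and \<theta> :: "real \<Rightarrow> 'a \<Rightarrow> 'a"
    and M :: "'w measure"
    and W :: "real \<Rightarrow> 'w \<Rightarrow> 'a"
    and X :: "'a \<Rightarrow> real \<Rightarrow> 'w \<Rightarrow> 'a"
    and \<kappa> :: "'a \<Rightarrow> 'a \<Rightarrow> real"
    and Dx Dy :: "'a \<Rightarrow> 'a \<Rightarrow> 'a"
    and D :: "'a set"
    and lam0 lam1 C0 C1 :: real
  assumes A: "locally_lipschitz_drift b"
    and B: "dissipative_drift b"
    and flow: "is_flow b \<theta>"
    and BM: "is_brownian_motion M W"
    and sol: "is_sde_solution M b W X"
    and dens: "\<And>x. distributed M lborel (X x 1) (\<lambda>y. ennreal (\<kappa> x y))"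
    and cont: "continuous_on UNIV (\<lambda>(x, y). \<kappa> x y)"
    and pos_consts: "0 < lam0" "lam0 \<le> 1" "0 < lam1" "lam1 \<le> 1" "1 \<le> C0" "1 \<le> C1"
    and lower: "\<And>x y. exp (- (norm (\<theta> 1 x - y))\<^sup>2 / lam0) / C0 \<le> \<kappa> x y"
    and upper: "\<And>x y. \<kappa> x y \<le> C0 * exp (- lam0 * (norm (\<theta> 1 x - y))\<^sup>2)"
    and grad_x: "\<And>x y. ((\<lambda>x'. \<kappa> x' y) has_derivative (\<lambda>h. Dx x y \<bullet> h)) (at x)"
    and grad_y: "\<And>x y. ((\<lambda>y'. \<kappa> x y') has_derivative (\<lambda>h. Dy x y \<bullet> h)) (at y)"
    and grad_bounds: "\<And>x y. norm (Dx x y) \<le> C1 * exp (- lam1 * (norm (\<theta> 1 x - y))\<^sup>2)"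
                     "\<And>x y. norm (Dy x y) \<le> C1 * exp (- lam1 * (norm (\<theta> 1 x - y))\<^sup>2)"
    and D: "compact D" "0 \<in> interior D"
  shows "\<exists>Ac Bc lam::real. Ac > 0 \<and> Bc > 0 \<and> 0 < lam \<and> lam < 1 \<and>
           (\<forall>f\<in>strong_space D. \<forall>n::nat.
              strong_norm D ((transfer_op \<kappa> ^^ n) f)
                \<le> ennreal (Ac * lam ^ n) * strong_norm D f + ennreal Bc * L1_norm f)"
proof -
  obtain c1 c2 :: real where c2: "0 < c2" and diss: "\<And>x. b x \<bullet> x \<le> c1 - c2 * (norm x)\<^sup>2"
    using B unfolding dissipative_drift_def by blast
  interpret prob_space M
    using BM by (simp add: is_brownian_motion_def)
  have \<kappa>_nonneg: "0 \<le> \<kappa> x y" for x y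
    using order.trans[OF _ lower[of x y]] pos_consts by simp
  interpret transfer_kernel \<kappa>
    using borel_measurable_lborel_pair_continuous[OF cont] \<kappa>_nonneg
      distributed_nn_integral_density_eq_1[OF dens]
    by unfold_locales simp_all
  have \<kappa>_le: "\<kappa> x y \<le> C0" for x y
    using order.trans[OF upper[of x y]] pos_consts by simp
  obtain \<gamma> C where \<gamma>: "0 < \<gamma>" "\<gamma> < 1" and C: "0 \<le> C"
    and moment: "\<And>x. (\<integral>\<^sup>+ y. ennreal (rho 2 y * \<kappa> x y) \<partial>lborel) \<le> ennreal (\<gamma> * rho 2 x + C)"
    using moment_contraction[OF upper _ flow_norm_sq_le[OF flow diss c2]] pos_consts c2 by auto
  define K where "K = C0 * sqrt (measure lborel D) + 1"
  have "strong_norm D ((transfer_op \<kappa> ^^ n) f)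
      \<le> ennreal (\<gamma> ^ n) * strong_norm D f + ennreal (C / (1 - \<gamma>) + K) * L1_norm f"
    if "f \<in> strong_space D" for f n
    using that \<gamma> C pos_consts unfolding K_def strong_space_def
    by (intro strong_norm_iterate_le borel_measurable_transfer_op L1_norm_transfer_op_le
        L1w_norm_transfer_op_le[OF _ moment] L2_on_norm_transfer_op_le[OF _ \<kappa>_le D(1)]) auto
  moreover have "0 < C / (1 - \<gamma>) + K"
    using \<gamma> C pos_consts by (simp add: K_def add_nonneg_pos)
  ultimately show ?thesis
    using \<gamma> by (intro exI[of _ 1] exI[of _ "C / (1 - \<gamma>) + K"] exI[of _ \<gamma>]) auto
qed

end
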